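(* Let $n \geq 2k \geq 4$. Suppose that $\mathcal F, \mathcal G \subset \binom{[n]}{k}$ are non-trivial, cross-intersecting, initial families. Then $$|\mathcal F| + |\mathcal G| \leq k+1 + \sum_{2 \leq i \leq k} \binom{k+1}{i}\binom{n-k-1}{k-i}.$$
   Context: $\binom{[n]}{k}$ is the collection of $k$-subsets of $[n]=\{1,\dots,n\}$. Families $\mathcal F,\mathcal G$ are cross-intersecting if $F\cap G\neq\emptyset$ for all $F\in\mathcal F$, $G\in\mathcal G$. A (non-empty) family is non-trivial if the intersection of all its members is empty. For $k$-sets $A=\{x_1<\dots<x_k\}$ and $B=\{y_1<\dots<y_k\}$ write $A \prec B$ if $x_i \leq y_i$ for all $1\le i\le k$. A family $\mathcal F\subset\binom{[n]}{k}$ is initial (shifted) if $A \prec B$ and $B\in\mathcal F$ imply $A \in \mathcal F$. *)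

theory Defs
  imports Main
begin

definition ksubsets :: "nat \<Rightarrow> nat \<Rightarrow> nat set set" where
  "ksubsets n k = {A. A \<subseteq> {1..n} \<and> card A = k}"

definition cross_intersecting :: "nat set set \<Rightarrow> nat set set \<Rightarrow> bool" where
  "cross_intersecting F G \<longleftrightarrow> (\<forall>A\<in>F. \<forall>B\<in>G. A \<inter> B \<noteq> {})"

definition nontrivial :: "nat set set \<Rightarrow> bool" where
  "nontrivial F \<longleftrightarrow> F \<noteq> {} \<and> \<Inter>F = {}"

definition shift_le :: "nat set \<Rightarrow> nat set \<Rightarrow> bool" where
  "shift_le A B \<longleftrightarrow> finite A \<and> finite B \<and> card A = card B \<and>
     (\<forall>i < card A. sorted_list_of_set A ! i \<le> sorted_list_of_set B ! i)"

definition initial :: "nat \<Rightarrow> nat \<Rightarrow> nat set set \<Rightarrow> bool" where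
  "initial n k F \<longleftrightarrow> F \<subseteq> ksubsets n k \<and>
     (\<forall>A\<in>ksubsets n k. \<forall>B\<in>F. shift_le A B \<longrightarrow> A \<in> F)"

end

theory Submission imports Defs begin

text \<open>Both families contain \<open>{2..k+1}\<close>: non-triviality gives a member avoiding 1, and
  \<open>{2..k+1}\<close> precedes it. Shifting down one element of a member of \<open>G\<close> then shows that every
  member of \<open>G\<close>, and symmetrically of \<open>F\<close>, meets \<open>[k+1]\<close> at least twice. It remains to bound
  \<open>|F| + |G|\<close> for initial cross-intersecting families inside the family \<open>T\<close> of all
  \<open>k\<close>-subsets of \<open>[n]\<close> meeting \<open>[s]\<close> at least twice, namely by \<open>|T|\<close>, plus \<open>s\<close> when
  \<open>s = k + 1\<close>. This goes by induction on \<open>n\<close>, splitting by whether \<open>n\<close> belongs to a set: the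
  sets avoiding \<open>n\<close> and the links of \<open>n\<close> are again initial, and the links stay
  cross-intersecting since \<open>2k \<le> n - 1\<close> leaves a free point to shift into. For \<open>n = 2k\<close>,
  complementation maps \<open>F\<close> injectively into \<open>T - G\<close>, except for the \<open>k\<close>-subsets of \<open>[k+1]\<close>,
  whose complements meet \<open>[k+1]\<close> only once; there are \<open>k + 1\<close> of them.\<close>

lemma card_le_nth_sorted_list_of_set:
  assumes "finite B" "i < card B"
  shows "Suc i \<le> card {b\<in>B. b \<le> sorted_list_of_set B ! i}"
proof -
  let ?ys = "sorted_list_of_set B"
  have len: "length ?ys = card B" and set_ys: "set ?ys = B" and dist: "distinct ?ys"
    using assms(1) by simp_all
  have sub: "(!) ?ys ` {..i} \<subseteq> {b\<in>B. b \<le> ?ys ! i}"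
  proof
    fix y assume "y \<in> (!) ?ys ` {..i}"
    then obtain j where j: "j \<le> i" "y = ?ys ! j" by auto
    have "?ys ! j \<le> ?ys ! i" using sorted_nth_mono[OF sorted_sorted_list_of_set j(1)] assms len by simp
    moreover have "j < length ?ys" using j(1) assms(2) len by simp
    hence "?ys ! j \<in> B" using set_ys nth_mem by blast
    ultimately show "y \<in> {b\<in>B. b \<le> ?ys ! i}" using j by simp
  qed
  have "inj_on ((!) ?ys) {..i}"
    using dist assms len by (auto simp: inj_on_def nth_eq_iff_index_eq)
  hence "Suc i = card ((!) ?ys ` {..i})" by (simp add: card_image)
  also have "\<dots> \<le> card {b\<in>B. b \<le> ?ys ! i}" using assms(1) sub by (intro card_mono) simp_all
  finally show ?thesis .
qed

lemma card_less_nth_sorted_list_of_set: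
  assumes "finite A" "i < card A"
  shows "card {a\<in>A. a < sorted_list_of_set A ! i} \<le> i"
proof -
  let ?xs = "sorted_list_of_set A"
  have "{a\<in>A. a < ?xs ! i} \<subseteq> (!) ?xs ` {..<i}"
  proof
    fix a assume a: "a \<in> {a\<in>A. a < ?xs ! i}"
    then obtain j where j: "j < length ?xs" "a = ?xs ! j"
      using assms(1) by (metis (no_types, lifting) in_set_conv_nth mem_Collect_eq set_sorted_list_of_set)
    have "j < i"
      using a j sorted_nth_mono[OF sorted_sorted_list_of_set, of i j A] by (auto simp: not_less[symmetric])
    thus "a \<in> (!) ?xs ` {..<i}" using j by auto
  qed
  hence "card {a\<in>A. a < ?xs ! i} \<le> card ((!) ?xs ` {..<i})" by (intro card_mono) auto
  also have "\<dots> \<le> i" using card_image_le[of "{..<i}" "(!) ?xs"] by simp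
  finally show ?thesis .
qed

lemma shift_le_if_count_le:
  assumes fin: "finite A" "finite B" and card_eq: "card A = card B"
    and count: "\<And>m. card {b\<in>B. b \<le> m} \<le> card {a\<in>A. a \<le> m}"
  shows "shift_le A B"
  unfolding shift_le_def
proof (intro conjI allI impI)
  show "finite A" "finite B" "card A = card B" by fact+
  fix i assume i: "i < card A"
  let ?x = "sorted_list_of_set A ! i" and ?y = "sorted_list_of_set B ! i"
  show "?x \<le> ?y"
  proof (rule ccontr)
    assume "\<not> ?x \<le> ?y"
    hence "{a\<in>A. a \<le> ?y} \<subseteq> {a\<in>A. a < ?x}" by auto
    hence "card {a\<in>A. a \<le> ?y} \<le> card {a\<in>A. a < ?x}" using fin(1) by (intro card_mono) auto
    hence "card {a\<in>A. a \<le> ?y} \<le> i" using card_less_nth_sorted_list_of_set[OF fin(1) i] by simp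
    moreover have "Suc i \<le> card {b\<in>B. b \<le> ?y}"
      using card_le_nth_sorted_list_of_set[OF fin(2)] i card_eq by simp
    ultimately show False using count[of ?y] by simp
  qed
qed

lemma count_le_if_shift_le:
  assumes "shift_le A B"
  shows "card {b\<in>B. b \<le> m} \<le> card {a\<in>A. a \<le> m}"
proof -
  have fA: "finite A" and fB: "finite B" and c: "card A = card B"
    and le: "\<And>i. i < card A \<Longrightarrow> sorted_list_of_set A ! i \<le> sorted_list_of_set B ! i"
    using assms by (auto simp: shift_le_def)
  define xs where "xs = sorted_list_of_set A"
  define ys where "ys = sorted_list_of_set B"
  have lx: "length xs = card A" and ly: "length ys = card A"
    using c by (simp_all add: xs_def ys_def)
  have dx: "distinct xs" and dy: "distinct ys" by (simp_all add: xs_def ys_def)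
  have setx: "set xs = A" and sety: "set ys = B" using fA fB by (simp_all add: xs_def ys_def)
  define J where "J = {j. j < card A \<and> ys ! j \<le> m}"
  have "{b\<in>B. b \<le> m} = (!) ys ` J"
    using sety ly by (auto simp: J_def in_set_conv_nth)
  moreover have "inj_on ((!) ys) J" using dy ly by (auto simp: J_def inj_on_def nth_eq_iff_index_eq)
  ultimately have card_B: "card {b\<in>B. b \<le> m} = card J" by (simp add: card_image)
  have "(!) xs ` J \<subseteq> {a\<in>A. a \<le> m}"
  proof
    fix a assume "a \<in> (!) xs ` J"
    then obtain j where j: "j < card A" "ys ! j \<le> m" "a = xs ! j" by (auto simp: J_def)
    have "xs ! j \<in> A" using j(1) lx setx nth_mem by metis
    moreover have "xs ! j \<le> ys ! j" using le[OF j(1)] by (simp add: xs_def ys_def)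
    ultimately show "a \<in> {a\<in>A. a \<le> m}" using j by simp
  qed
  hence "card ((!) xs ` J) \<le> card {a\<in>A. a \<le> m}"
    by (rule card_mono[rotated]) (use fA in simp)
  moreover have "card ((!) xs ` J) = card J"
    using dx lx by (auto simp: J_def inj_on_def nth_eq_iff_index_eq intro: card_image)
  ultimately show ?thesis using card_B by simp
qed

lemma card_filter_insert:
  assumes "finite A" "x \<notin> A"
  shows "card {a\<in>insert x A. a \<le> m} = card {a\<in>A. a \<le> m} + (if x \<le> m then 1 else 0)"
proof (cases "x \<le> m")
  case True
  hence "{a\<in>insert x A. a \<le> m} = insert x {a\<in>A. a \<le> m}" by auto
  thus ?thesis using assms True by simp
next
  case False
  hence "{a\<in>insert x A. a \<le> m} = {a\<in>A. a \<le> m}" by auto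
  thus ?thesis using False by simp
qed

lemma shift_le_insert:
  assumes "shift_le A B" "x \<notin> A" "x \<notin> B"
  shows "shift_le (insert x A) (insert x B)"
proof -
  have fA: "finite A" and fB: "finite B" and c: "card A = card B"
    using assms by (auto simp: shift_le_def)
  show ?thesis
  proof (rule shift_le_if_count_le)
    show "finite (insert x A)" "finite (insert x B)" using fA fB by auto
    show "card (insert x A) = card (insert x B)" using fA fB c assms by simp
    fix m
    show "card {b\<in>insert x B. b \<le> m} \<le> card {a\<in>insert x A. a \<le> m}"
      using card_filter_insert[OF fA assms(2)] card_filter_insert[OF fB assms(3)]
        count_le_if_shift_le[OF assms(1), of m] by simp
  qed
qed

lemma shift_le_replace_smaller:
  assumes fB: "finite B" and y: "y \<in> B" and x: "x \<notin> B" and xy: "x \<le> y"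
  shows "shift_le (insert x (B - {y})) B"
proof (rule shift_le_if_count_le)
  show "finite (insert x (B - {y}))" "finite B" using fB by auto
  show "card (insert x (B - {y})) = card B" using fB y x
    by (simp add: card_Diff_singleton) (metis Suc_pred card_gt_0_iff empty_iff)
  fix m
  show "card {b\<in>B. b \<le> m} \<le> card {a\<in>insert x (B - {y}). a \<le> m}"
  proof (cases "x \<le> m")
    case False
    hence "{a\<in>insert x (B - {y}). a \<le> m} = {b\<in>B. b \<le> m}" using xy y by auto
    thus ?thesis by simp
  next
    case True
    have f: "finite {b\<in>B - {y}. b \<le> m}" using fB by simp
    have "{a\<in>insert x (B - {y}). a \<le> m} = insert x {b\<in>B - {y}. b \<le> m}" using True by auto
    hence e: "card {a\<in>insert x (B - {y}). a \<le> m} = Suc (card {b\<in>B - {y}. b \<le> m})"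
      using x f by simp
    have "{b\<in>B. b \<le> m} \<subseteq> insert y {b\<in>B - {y}. b \<le> m}" by auto
    hence "card {b\<in>B. b \<le> m} \<le> card (insert y {b\<in>B - {y}. b \<le> m})"
      using f by (intro card_mono) auto
    also have "\<dots> \<le> Suc (card {b\<in>B - {y}. b \<le> m})" by (simp add: card_insert_if f)
    finally show ?thesis using e by simp
  qed
qed

lemma shift_le_interval_if_one_notin:
  assumes A: "A \<subseteq> {1..n}" "1 \<notin> A" "card A = k"
  shows "shift_le {2..k+1} A"
proof (rule shift_le_if_count_le)
  have fA: "finite A" using A finite_subset by blast
  show "finite {2..k+1}" "finite A" using fA by auto
  show "card {2..k+1} = card A" using A by simp
  fix m
  show "card {b\<in>A. b \<le> m} \<le> card {a\<in>{2..k+1}. a \<le> m}"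
  proof (cases "m \<le> k+1")
    case True
    have "{b\<in>A. b \<le> m} \<subseteq> {2..m}"
    proof clarify
      fix b assume "b \<in> A" "b \<le> m"
      moreover from this have "1 \<le> b" "b \<noteq> 1" using A by auto
      ultimately show "b \<in> {2..m}" by simp
    qed
    hence "card {b\<in>A. b \<le> m} \<le> card {2..m}" by (rule card_mono[rotated]) simp
    moreover have "{a\<in>{2..k+1}. a \<le> m} = {2..m}" using True by auto
    ultimately show ?thesis by simp
  next
    case False
    have "{a\<in>{2..k+1}. a \<le> m} = {2..k+1}" using False by auto
    moreover have "card {b\<in>A. b \<le> m} \<le> card A" using fA by (intro card_mono) auto
    ultimately show ?thesis using A by simp
  qed
qed

lemma ksubsets_iff: "A \<in> ksubsets n k \<longleftrightarrow> A \<subseteq> {1..n} \<and> card A = k"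
  by (simp add: ksubsets_def)

lemma finite_ksubsets: "finite (ksubsets n k)"
  by (rule finite_subset[of _ "Pow {1..n}"]) (auto simp: ksubsets_def)

lemma cross_intersecting_commute: "cross_intersecting F G \<Longrightarrow> cross_intersecting G F"
  by (auto simp: cross_intersecting_def)

definition hits_twice :: "nat \<Rightarrow> nat \<Rightarrow> nat \<Rightarrow> nat set set" where
  "hits_twice n k s = {A \<in> ksubsets n k. 2 \<le> card (A \<inter> {1..s})}"

definition link :: "nat \<Rightarrow> nat set set \<Rightarrow> nat set set" where
  "link x F = (\<lambda>A. A - {x}) ` {A\<in>F. x \<in> A}"

lemma link_mono: "F \<subseteq> G \<Longrightarrow> link x F \<subseteq> link x G"
  by (auto simp: link_def)

lemma card_split_link:
  assumes "finite F"
  shows "card F = card {A\<in>F. x \<notin> A} + card (link x F)"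
proof -
  have "card F = card {A\<in>F. x \<notin> A} + card {A\<in>F. x \<in> A}"
    using assms by (subst card_Un_disjoint[symmetric]) (auto intro: arg_cong[where f = card])
  moreover have "inj_on (\<lambda>A. A - {x}) {A\<in>F. x \<in> A}"
    by (rule inj_onI) (metis (no_types, lifting) insert_Diff mem_Collect_eq)
  ultimately show ?thesis by (simp add: link_def card_image)
qed

lemma finite_hits_twice: "finite (hits_twice n k s)"
  by (rule finite_subset[OF _ finite_ksubsets]) (auto simp: hits_twice_def)

lemma hits_twice_empty:
  assumes "k \<le> 1"
  shows "hits_twice n k s = {}"
proof -
  have "card (A \<inter> {1..s}) \<le> 1" if "A \<in> ksubsets n k" for A
  proof -
    have "card (A \<inter> {1..s}) \<le> card A"
      using that by (intro card_mono) (auto simp: ksubsets_iff intro: finite_subset)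
    thus ?thesis using that assms by (simp add: ksubsets_iff)
  qed
  hence "A \<notin> hits_twice n k s" for A by (force simp: hits_twice_def)
  thus ?thesis by blast
qed

lemma card_ksubsets_with_trace:
  assumes "s \<le> n" "i \<le> k"
  shows "card {A \<in> ksubsets n k. card (A \<inter> {1..s}) = i} = (s choose i) * ((n - s) choose (k - i))"
proof -
  define P where "P = {A \<in> ksubsets n k. card (A \<inter> {1..s}) = i}"
  define X where "X = {X. X \<subseteq> {1..s} \<and> card X = i}"
  define Y where "Y = {Y. Y \<subseteq> {s+1..n} \<and> card Y = k - i}"
  define h where "h A = (A \<inter> {1..s}, A - {1..s})" for A :: "nat set"
  have "inj_on h P" by (auto simp: inj_on_def h_def)
  moreover have "h ` P = X \<times> Y"
  proof
    show "h ` P \<subseteq> X \<times> Y"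
    proof
      fix p assume "p \<in> h ` P"
      then obtain A where A: "A \<in> P" "p = h A" by auto
      hence A1: "A \<subseteq> {1..n}" "card A = k" "card (A \<inter> {1..s}) = i" "finite A"
        by (auto simp: P_def ksubsets_iff intro: finite_subset)
      have "card (A - {1..s}) = k - i" using A1 by (simp add: card_Diff_subset_Int)
      moreover have "A - {1..s} \<subseteq> {s+1..n}" using A1(1) by auto
      ultimately show "p \<in> X \<times> Y" using A A1 by (auto simp: h_def X_def Y_def)
    qed
    show "X \<times> Y \<subseteq> h ` P"
    proof
      fix p assume "p \<in> X \<times> Y"
      then obtain U V where p: "p = (U, V)" "U \<subseteq> {1..s}" "card U = i" "V \<subseteq> {s+1..n}" "card V = k - i"
        by (auto simp: X_def Y_def)
      have fin: "finite U" "finite V" using p finite_subset by blast+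
      have U: "\<forall>x\<in>U. 1 \<le> x \<and> x \<le> s" and V: "\<forall>x\<in>V. s < x \<and> x \<le> n"
        using p(2,4) by auto
      have "U \<inter> V = {}" using U V by fastforce
      hence "card (U \<union> V) = card U + card V" using fin by (simp add: card_Un_disjoint)
      moreover have "U \<union> V \<subseteq> {1..n}" using U V assms(1) by auto
      moreover have "(U \<union> V) \<inter> {1..s} = U" "(U \<union> V) - {1..s} = V" using U V by fastforce+
      ultimately have "U \<union> V \<in> P" "h (U \<union> V) = p"
        using p assms(2) by (auto simp: P_def ksubsets_iff h_def)
      thus "p \<in> h ` P" by (metis imageI)
    qed
  qed
  ultimately have "card P = card X * card Y"
    by (metis bij_betw_def bij_betw_same_card card_cartesian_product)
  also have "card X = s choose i" unfolding X_def using n_subsets[of "{1..s}" i] by simp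
  also have "card Y = (n - s) choose (k - i)" unfolding Y_def using n_subsets[of "{s+1..n}" "k - i"] by simp
  finally show ?thesis unfolding P_def .
qed

lemma card_hits_twice:
  assumes "s \<le> n"
  shows "card (hits_twice n k s) = (\<Sum>i\<in>{2..k}. (s choose i) * ((n - s) choose (k - i)))"
proof -
  define P where "P i = {A \<in> ksubsets n k. card (A \<inter> {1..s}) = i}" for i
  have "card (A \<inter> {1..s}) \<le> k" if "A \<in> ksubsets n k" for A
    using that card_mono[of A "A \<inter> {1..s}"] by (auto simp: ksubsets_iff intro: finite_subset)
  hence "hits_twice n k s = (\<Union>i\<in>{2..k}. P i)"
    by (auto simp: hits_twice_def P_def)
  moreover have "finite (P i)" for i
    by (rule finite_subset[OF _ finite_ksubsets]) (auto simp: P_def)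
  ultimately have "card (hits_twice n k s) = (\<Sum>i\<in>{2..k}. card (P i))"
    by (simp only:) (rule card_UN_disjoint; auto simp: P_def)
  also have "\<dots> = (\<Sum>i\<in>{2..k}. (s choose i) * ((n - s) choose (k - i)))"
    using card_ksubsets_with_trace[OF assms] by (simp add: P_def)
  finally show ?thesis .
qed

lemma card_cross_intersecting_singletons:
  assumes F: "F \<subseteq> ksubsets m 1" and G: "G \<subseteq> ksubsets m 1"
    and cross: "cross_intersecting F G" and m: "2 \<le> m"
  shows "card F + card G \<le> card (ksubsets m 1)"
proof (cases "F = {} \<or> G = {}")
  case True
  thus ?thesis using F G by (auto intro: card_mono[OF finite_ksubsets])
next
  case False
  then obtain A B where AB: "A \<in> F" "B \<in> G" by auto
  have eq: "A' = B'" if "A' \<in> F" "B' \<in> G" for A' B'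
  proof -
    have "card A' = 1" "card B' = 1" using that F G by (auto simp: ksubsets_iff)
    then obtain a b where "A' = {a}" "B' = {b}" by (metis One_nat_def card_1_singleton_iff)
    moreover have "A' \<inter> B' \<noteq> {}" using cross that by (auto simp: cross_intersecting_def)
    ultimately show ?thesis by auto
  qed
  have "F \<subseteq> {B}" "G \<subseteq> {A}" using eq AB by auto
  hence "card F \<le> 1" "card G \<le> 1" by (auto dest: card_mono[rotated])
  moreover have "{{1}, {2}} \<subseteq> ksubsets m 1" using m by (auto simp: ksubsets_iff)
  hence "card {{1::nat}, {2}} \<le> card (ksubsets m 1)" by (rule card_mono[OF finite_ksubsets])
  ultimately show ?thesis by simp
qed

lemma initial_avoiding_max:
  assumes "initial (Suc m) k F"
  shows "initial m k {A\<in>F. Suc m \<notin> A}"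
  unfolding initial_def
proof (intro conjI ballI impI)
  have "F \<subseteq> ksubsets (Suc m) k" using assms by (simp add: initial_def)
  thus "{A \<in> F. Suc m \<notin> A} \<subseteq> ksubsets m k"
    by (auto simp: ksubsets_iff le_Suc_eq subset_iff)
  fix A B assume A: "A \<in> ksubsets m k" and "B \<in> {A \<in> F. Suc m \<notin> A}" "shift_le A B"
  moreover have "A \<in> ksubsets (Suc m) k" "Suc m \<notin> A" using A by (auto simp: ksubsets_iff)
  ultimately show "A \<in> {A \<in> F. Suc m \<notin> A}" using assms by (auto simp: initial_def)
qed

lemma initial_link_max:
  assumes "initial (Suc m) k F" "1 \<le> k"
  shows "initial m (k - 1) (link (Suc m) F)"
  unfolding initial_def
proof (intro conjI ballI impI)
  have Fk: "F \<subseteq> ksubsets (Suc m) k" using assms by (simp add: initial_def)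
  show "link (Suc m) F \<subseteq> ksubsets m (k - 1)"
  proof
    fix A' assume "A' \<in> link (Suc m) F"
    then obtain A where A: "A \<in> F" "Suc m \<in> A" "A' = A - {Suc m}" by (auto simp: link_def)
    hence "A \<in> ksubsets (Suc m) k" using Fk by blast
    hence A1: "A \<subseteq> {1..Suc m}" "card A = k" by (simp_all add: ksubsets_iff)
    hence "card A' = k - 1" using A finite_subset by fastforce
    moreover have "A' \<subseteq> {1..m}" using A A1 le_Suc_eq by fastforce
    ultimately show "A' \<in> ksubsets m (k - 1)" by (simp add: ksubsets_iff)
  qed
  fix A' B' assume A': "A' \<in> ksubsets m (k - 1)" and "B' \<in> link (Suc m) F" and sh: "shift_le A' B'"
  then obtain B where B: "B \<in> F" "Suc m \<in> B" "B' = B - {Suc m}" by (auto simp: link_def)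
  have notin: "Suc m \<notin> A'" and fin: "finite A'"
    using A' by (auto simp: ksubsets_iff intro: finite_subset)
  have "shift_le (insert (Suc m) A') B"
    using shift_le_insert[OF sh notin] B by (simp add: insert_absorb)
  moreover have "insert (Suc m) A' \<in> ksubsets (Suc m) k"
    using A' notin fin assms(2) by (auto simp: ksubsets_iff)
  ultimately have "insert (Suc m) A' \<in> F" using assms(1) B by (auto simp: initial_def)
  moreover have "A' = insert (Suc m) A' - {Suc m}" using notin by simp
  ultimately show "A' \<in> link (Suc m) F" unfolding link_def by blast
qed

text \<open>Two disjoint links cover fewer than \<open>m\<close> points of \<open>[m]\<close>, so the maximum \<open>m + 1\<close> of a
  member of \<open>F\<close> can be traded for a free point, producing a member of \<open>F\<close> disjoint from
  a member of \<open>G\<close>.\<close>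

lemma cross_intersecting_link_max:
  assumes iF: "initial (Suc m) k F" and iG: "initial (Suc m) k G"
    and cross: "cross_intersecting F G" and km: "2 * k \<le> m" and k: "1 \<le> k"
  shows "cross_intersecting (link (Suc m) F) (link (Suc m) G)"
  unfolding cross_intersecting_def
proof (intro ballI notI)
  fix A' B' assume "A' \<in> link (Suc m) F" "B' \<in> link (Suc m) G" and disj: "A' \<inter> B' = {}"
  then obtain A B where A: "A \<in> F" "Suc m \<in> A" "A' = A - {Suc m}"
    and B: "B \<in> G" "Suc m \<in> B" "B' = B - {Suc m}"
    by (auto simp: link_def)
  have "A \<in> ksubsets (Suc m) k" "B \<in> ksubsets (Suc m) k"
    using A B iF iG by (auto simp: initial_def)
  hence A1: "A \<subseteq> {1..Suc m}" "card A = k" and B1: "B \<subseteq> {1..Suc m}" "card B = k"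
    by (simp_all add: ksubsets_iff)
  have fin: "finite A" "finite B" using A1 B1 finite_subset by blast+
  have "card (A' \<union> B') \<le> card A' + card B'" by (rule card_Un_le)
  hence "card (A' \<union> B') < card {1..m}" using A B A1 B1 fin km k by simp
  hence "\<not> {1..m} \<subseteq> A' \<union> B'" using fin A B by (metis card_mono finite_Diff finite_Un not_le)
  then obtain x where x: "x \<in> {1..m}" "x \<notin> A'" "x \<notin> B'" by blast
  have xAB: "x \<notin> A" "x \<notin> B" using x A B by auto
  define A'' where "A'' = insert x (A - {Suc m})"
  have "shift_le A'' A"
    unfolding A''_def by (rule shift_le_replace_smaller[OF fin(1) A(2) xAB(1)]) (use x in simp)
  moreover have "A'' \<in> ksubsets (Suc m) k"
  proof -
    have "card A'' = k" using xAB fin A A1 k by (simp add: A''_def)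
    moreover have "A'' \<subseteq> {1..Suc m}" using A1 x by (auto simp: A''_def)
    ultimately show ?thesis by (simp add: ksubsets_iff)
  qed
  ultimately have "A'' \<in> F" using iF A by (auto simp: initial_def)
  hence "A'' \<inter> B \<noteq> {}" using cross B by (auto simp: cross_intersecting_def)
  moreover have "A'' \<inter> B = {}" using disj xAB A B by (auto simp: A''_def)
  ultimately show False by simp
qed

lemma hits_twice_avoiding_max: "{A \<in> hits_twice (Suc m) k s. Suc m \<notin> A} = hits_twice m k s"
  by (auto simp: hits_twice_def ksubsets_iff le_Suc_eq subset_iff)

lemma card_hits_twice_split_max:
  "card (hits_twice (Suc m) k s) = card (hits_twice m k s) + card (link (Suc m) (hits_twice (Suc m) k s))"
  using card_split_link[OF finite_hits_twice, of "Suc m" k s "Suc m"]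
  by (simp add: hits_twice_avoiding_max)

lemma link_hits_twice_max:
  assumes k: "2 \<le> k" and "s < Suc m \<or> 3 \<le> k"
  shows "link (Suc m) (hits_twice (Suc m) k s) = hits_twice m (k - 1) s"
proof
  show "link (Suc m) (hits_twice (Suc m) k s) \<subseteq> hits_twice m (k - 1) s"
  proof
    fix A' assume "A' \<in> link (Suc m) (hits_twice (Suc m) k s)"
    then obtain A where A: "A \<in> hits_twice (Suc m) k s" "Suc m \<in> A" "A' = A - {Suc m}"
      by (auto simp: link_def)
    hence A1: "A \<subseteq> {1..Suc m}" "card A = k" "2 \<le> card (A \<inter> {1..s})" "finite A"
      by (auto simp: hits_twice_def ksubsets_iff intro: finite_subset)
    have "A' \<in> ksubsets m (k - 1)"
      using A A1 le_Suc_eq by (fastforce simp: ksubsets_iff)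
    moreover have "2 \<le> card (A' \<inter> {1..s})"
    proof (cases "s < Suc m")
      case True
      hence "A' \<inter> {1..s} = A \<inter> {1..s}" using A by auto
      thus ?thesis using A1 by simp
    next
      case False
      hence "3 \<le> k" "A' \<inter> {1..s} = A'" using assms A A1 by auto
      thus ?thesis using A A1 by simp
    qed
    ultimately show "A' \<in> hits_twice m (k - 1) s" by (simp add: hits_twice_def)
  qed
  show "hits_twice m (k - 1) s \<subseteq> link (Suc m) (hits_twice (Suc m) k s)"
  proof
    fix A' assume A': "A' \<in> hits_twice m (k - 1) s"
    hence A1: "A' \<subseteq> {1..m}" "card A' = k - 1" "2 \<le> card (A' \<inter> {1..s})" "finite A'"
      by (auto simp: hits_twice_def ksubsets_iff intro: finite_subset)
    have notin: "Suc m \<notin> A'" using A1 by auto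
    have "card (A' \<inter> {1..s}) \<le> card (insert (Suc m) A' \<inter> {1..s})"
      using A1 by (intro card_mono) auto
    hence "insert (Suc m) A' \<in> hits_twice (Suc m) k s"
      using A1 notin k by (auto simp: hits_twice_def ksubsets_iff)
    moreover have "A' = insert (Suc m) A' - {Suc m}" using notin by simp
    ultimately show "A' \<in> link (Suc m) (hits_twice (Suc m) k s)" unfolding link_def by blast
  qed
qed

lemma link_hits_twice_pairs:
  assumes "Suc m \<le> s"
  shows "link (Suc m) (hits_twice (Suc m) 2 s) = ksubsets m 1"
proof
  show "link (Suc m) (hits_twice (Suc m) 2 s) \<subseteq> ksubsets m 1"
  proof
    fix A' assume "A' \<in> link (Suc m) (hits_twice (Suc m) 2 s)"
    then obtain A where A: "A \<in> hits_twice (Suc m) 2 s" "Suc m \<in> A" "A' = A - {Suc m}"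
      by (auto simp: link_def)
    hence A1: "A \<subseteq> {1..Suc m}" "card A = 2" by (auto simp: hits_twice_def ksubsets_iff)
    hence "card A' = 1" using A finite_subset[OF A1(1)] by simp
    moreover have "A' \<subseteq> {1..m}" using A A1(1) le_Suc_eq by fastforce
    ultimately show "A' \<in> ksubsets m 1" by (simp add: ksubsets_iff)
  qed
  show "ksubsets m 1 \<subseteq> link (Suc m) (hits_twice (Suc m) 2 s)"
  proof
    fix A' assume "A' \<in> ksubsets m 1"
    then obtain a where a: "A' = {a}" "1 \<le> a" "a \<le> m"
      by (auto simp: ksubsets_iff card_1_singleton_iff)
    have "{a, Suc m} \<inter> {1..s} = {a, Suc m}" using a assms by auto
    hence "{a, Suc m} \<in> hits_twice (Suc m) 2 s"
      using a by (simp add: hits_twice_def ksubsets_iff)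
    moreover have "A' = {a, Suc m} - {Suc m}" using a by auto
    ultimately show "A' \<in> link (Suc m) (hits_twice (Suc m) 2 s)"
      unfolding link_def by blast
  qed
qed

lemma card_cross_intersecting_link_pairs:
  assumes "Suc m \<le> s" "2 \<le> m" and cross: "cross_intersecting F G"
    and "F \<subseteq> link (Suc m) (hits_twice (Suc m) 2 s)" "G \<subseteq> link (Suc m) (hits_twice (Suc m) 2 s)"
  shows "card F + card G \<le> card (link (Suc m) (hits_twice (Suc m) 2 s))"
  using card_cross_intersecting_singletons[OF _ _ cross] link_hits_twice_pairs assms by simp

lemma complement_mem_hits_twice:
  assumes n: "n = 2 * k" and k: "2 \<le> k" and ks: "k + 1 \<le> s"
    and A: "A \<in> hits_twice n k s" and not_small: "\<not> (k + 1 = s \<and> A \<subseteq> {1..s})"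
  shows "{1..n} - A \<in> hits_twice n k s"
proof -
  have A1: "A \<subseteq> {1..n}" "card A = k" "finite A"
    using A by (auto simp: hits_twice_def ksubsets_iff intro: finite_subset)
  have trace_le: "card (A \<inter> {1..s}) \<le> k" using A1 card_mono[of A "A \<inter> {1..s}"] by auto
  define I where "I = {1..n} \<inter> {1..s}"
  have "({1..n} - A) \<inter> {1..s} = I - A \<inter> {1..s}" by (auto simp: I_def)
  moreover have "A \<inter> {1..s} \<subseteq> I" using A1 by (auto simp: I_def)
  ultimately have trace: "card (({1..n} - A) \<inter> {1..s}) = card I - card (A \<inter> {1..s})"
    using A1 by (simp add: card_Diff_subset)
  have "2 \<le> card I - card (A \<inter> {1..s})"
  proof (cases "s \<le> n")
    case True
    hence "I = {1..s}" by (auto simp: I_def)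
    moreover have "card (A \<inter> {1..s}) \<noteq> k \<or> k + 1 \<noteq> s"
    proof (rule ccontr)
      assume "\<not> ?thesis"
      hence "A \<inter> {1..s} = A" "k + 1 = s" using A1 card_subset_eq[of A "A \<inter> {1..s}"] by auto
      thus False using not_small by auto
    qed
    ultimately show ?thesis using trace_le ks by auto
  next
    case False
    hence "I = {1..n}" by (auto simp: I_def)
    thus ?thesis using trace_le n k by simp
  qed
  moreover have "card ({1..n} - A) = k" using A1 n by (simp add: card_Diff_subset)
  ultimately show ?thesis using trace by (simp add: hits_twice_def ksubsets_iff)
qed

lemma card_cross_intersecting_hits_twice_half:
  assumes n: "n = 2 * k" and k: "2 \<le> k" and ks: "k + 1 \<le> s"
    and cross: "cross_intersecting F G"
    and F: "F \<subseteq> hits_twice n k s" and G: "G \<subseteq> hits_twice n k s"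
  shows "card F + card G \<le> card (hits_twice n k s) + (if k + 1 = s then s else 0)"
proof -
  define S where "S = {A. k + 1 = s \<and> A \<subseteq> {1..s} \<and> card A = k}"
  have card_S: "card S \<le> (if k + 1 = s then s else 0)"
  proof (cases "k + 1 = s")
    case True
    hence "card S = s choose k" using n_subsets[of "{1..s}" k] by (simp add: S_def)
    also have "\<dots> = s" using True binomial_Suc_n[of k] by simp
    finally show ?thesis using True by simp
  qed (simp add: S_def)
  have "finite S" by (rule finite_subset[of _ "Pow {1..s}"]) (auto simp: S_def)
  let ?T = "hits_twice n k s"
  let ?compl = "\<lambda>A. {1..n} - A"
  have "?compl A \<in> ?T - G" if A: "A \<in> F - S" for A
  proof
    have "A \<in> ?T" "card A = k" using A F by (auto simp: hits_twice_def ksubsets_iff)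
    thus "?compl A \<in> ?T" using complement_mem_hits_twice[OF n k ks] A by (auto simp: S_def)
    show "?compl A \<notin> G"
      using cross A by (auto simp: cross_intersecting_def)
  qed
  hence "?compl ` (F - S) \<subseteq> ?T - G" by blast
  moreover have "inj_on ?compl (F - S)"
  proof (rule inj_onI)
    fix A B assume "A \<in> F - S" "B \<in> F - S" "?compl A = ?compl B"
    moreover have "A \<subseteq> {1..n}" "B \<subseteq> {1..n}"
      using calculation F by (auto simp: hits_twice_def ksubsets_iff)
    ultimately show "A = B" by (metis double_diff order_refl)
  qed
  ultimately have "card (F - S) \<le> card (?T - G)"
    using card_mono[OF finite_Diff[OF finite_hits_twice]] by (metis card_image)
  also have "\<dots> = card ?T - card G"
    using G by (simp add: card_Diff_subset finite_subset[OF _ finite_hits_twice])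
  finally have "card (F - S) + card G \<le> card ?T"
    using G card_mono[OF finite_hits_twice G] by simp
  moreover have "card F \<le> card (F - S) + card S"
  proof -
    have "card F \<le> card ((F - S) \<union> S)"
      using \<open>finite S\<close> finite_subset[OF F finite_hits_twice] by (intro card_mono) auto
    also have "\<dots> \<le> card (F - S) + card S" by (rule card_Un_le)
    finally show ?thesis .
  qed
  ultimately show ?thesis using card_S by linarith
qed

lemma card_cross_intersecting_links:
  assumes IH: "\<And>F' G'. initial m (k - 1) F' \<Longrightarrow> initial m (k - 1) G' \<Longrightarrow> cross_intersecting F' G'
      \<Longrightarrow> F' \<subseteq> hits_twice m (k - 1) s \<Longrightarrow> G' \<subseteq> hits_twice m (k - 1) s
      \<Longrightarrow> card F' + card G' \<le> card (hits_twice m (k - 1) s)"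
    and k: "2 \<le> k" "2 * k \<le> m"
    and initial: "initial (Suc m) k F" "initial (Suc m) k G" and cross: "cross_intersecting F G"
    and family: "F \<subseteq> hits_twice (Suc m) k s" "G \<subseteq> hits_twice (Suc m) k s"
  shows "card (link (Suc m) F) + card (link (Suc m) G) \<le> card (link (Suc m) (hits_twice (Suc m) k s))"
proof -
  have init: "initial m (k - 1) (link (Suc m) F)" "initial m (k - 1) (link (Suc m) G)"
    using initial_link_max[OF initial(1)] initial_link_max[OF initial(2)] k by auto
  have cross_link: "cross_intersecting (link (Suc m) F) (link (Suc m) G)"
    by (rule cross_intersecting_link_max[OF initial cross]) (use k in auto)
  have sub: "link (Suc m) F \<subseteq> link (Suc m) (hits_twice (Suc m) k s)"
    "link (Suc m) G \<subseteq> link (Suc m) (hits_twice (Suc m) k s)"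
    using family by (simp_all add: link_mono)
  show ?thesis
  proof (cases "s < Suc m \<or> 3 \<le> k")
    case True
    thus ?thesis using IH[OF init cross_link] sub link_hits_twice_max[OF k(1)] by simp
  next
    case False
    hence "k = 2" "Suc m \<le> s" using k by auto
    thus ?thesis using card_cross_intersecting_link_pairs[OF _ _ cross_link] sub k by simp
  qed
qed

lemma card_cross_intersecting_hits_twice:
  assumes "2 * k \<le> n" "k + 1 \<le> s" "initial n k F" "initial n k G" "cross_intersecting F G"
    "F \<subseteq> hits_twice n k s" "G \<subseteq> hits_twice n k s"
  shows "card F + card G \<le> card (hits_twice n k s) + (if k + 1 = s then s else 0)"
  using assms
proof (induction n arbitrary: k F G)
  case 0
  hence "F = {}" "G = {}" using hits_twice_empty[of k 0 s] by auto
  thus ?case by simp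
next
  case (Suc m)
  let ?T = "hits_twice (Suc m) k s"
  consider (small) "k \<le> 1" | (half) "Suc m = 2 * k" "2 \<le> k" | (step) "2 \<le> k" "2 * k \<le> m"
    using Suc.prems(1) by linarith
  then show ?case
  proof cases
    case small
    hence "F = {}" "G = {}" using Suc.prems(6,7) hits_twice_empty by auto
    thus ?thesis by simp
  next
    case half
    thus ?thesis using card_cross_intersecting_hits_twice_half Suc.prems(2,5-7) by blast
  next
    case step
    have avoiding: "card {A\<in>F. Suc m \<notin> A} + card {A\<in>G. Suc m \<notin> A}
        \<le> card (hits_twice m k s) + (if k + 1 = s then s else 0)"
    proof (rule Suc.IH[OF step(2) Suc.prems(2)])
      show "initial m k {A\<in>F. Suc m \<notin> A}" "initial m k {A\<in>G. Suc m \<notin> A}"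
        using Suc.prems(3,4) by (simp_all add: initial_avoiding_max)
      show "cross_intersecting {A\<in>F. Suc m \<notin> A} {A\<in>G. Suc m \<notin> A}"
        using Suc.prems(5) by (auto simp: cross_intersecting_def)
      show "{A\<in>F. Suc m \<notin> A} \<subseteq> hits_twice m k s" "{A\<in>G. Suc m \<notin> A} \<subseteq> hits_twice m k s"
        using Suc.prems(6,7) hits_twice_avoiding_max[of m k s] by blast+
    qed
    have links: "card (link (Suc m) F) + card (link (Suc m) G) \<le> card (link (Suc m) ?T)"
    proof (rule card_cross_intersecting_links[OF _ step Suc.prems(3-7)])
      fix F' G' assume "initial m (k - 1) F'" "initial m (k - 1) G'" "cross_intersecting F' G'"
        "F' \<subseteq> hits_twice m (k - 1) s" "G' \<subseteq> hits_twice m (k - 1) s"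
      thus "card F' + card G' \<le> card (hits_twice m (k - 1) s)"
        using Suc.IH[of "k - 1" F' G'] step Suc.prems(2) by simp
    qed
    have "finite F" "finite G"
      using Suc.prems(6,7) by (simp_all add: finite_subset[OF _ finite_hits_twice])
    hence "card F = card {A\<in>F. Suc m \<notin> A} + card (link (Suc m) F)"
      "card G = card {A\<in>G. Suc m \<notin> A} + card (link (Suc m) G)"
      by (simp_all add: card_split_link)
    thus ?thesis using card_hits_twice_split_max[of m k s] avoiding links by linarith
  qed
qed

lemma interval_mem_if_nontrivial:
  assumes initial: "initial n k H" and "nontrivial H" and "k + 1 \<le> n"
  shows "{2..k+1} \<in> H"
proof -
  obtain A where A: "A \<in> H" "1 \<notin> A" using assms(2) by (auto simp: nontrivial_def)
  hence "A \<in> ksubsets n k" using initial by (auto simp: initial_def)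
  hence A1: "A \<subseteq> {1..n}" "card A = k" by (simp_all add: ksubsets_iff)
  have "shift_le {2..k+1} A" by (rule shift_le_interval_if_one_notin[OF A1(1) A(2) A1(2)])
  moreover have "{2..k+1} \<in> ksubsets n k" using assms(3) by (auto simp: ksubsets_iff)
  ultimately show ?thesis using initial A by (auto simp: initial_def)
qed

text \<open>A member \<open>B\<close> of \<open>G\<close> meets \<open>{2..k+1}\<close> in some \<open>j\<close>; if \<open>1 \<notin> B\<close>, shifting \<open>j\<close> down to 1
  gives another member of \<open>G\<close>, which must meet \<open>{2..k+1}\<close> in a second point of \<open>B\<close>.\<close>

lemma subset_hits_twice_if_cross_intersecting_interval:
  assumes initial: "initial n k G" and cross: "cross_intersecting F G" and I: "{2..k+1} \<in> F"
    and k: "2 \<le> k" and kn: "k + 1 \<le> n"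
  shows "G \<subseteq> hits_twice n k (k+1)"
proof
  fix B assume B: "B \<in> G"
  hence "B \<in> ksubsets n k" using initial by (auto simp: initial_def)
  hence B1: "B \<subseteq> {1..n}" "card B = k" by (simp_all add: ksubsets_iff)
  have fin: "finite B" using B1 finite_subset by blast
  have two: "2 \<le> card (B \<inter> {1..k+1})" if "a \<in> B \<inter> {1..k+1}" "b \<in> B \<inter> {1..k+1}" "a \<noteq> b" for a b
  proof -
    have "card {a, b} \<le> card (B \<inter> {1..k+1})" using that fin by (intro card_mono) auto
    thus ?thesis using that by simp
  qed
  have "{2..k+1} \<inter> B \<noteq> {}" using cross I B by (auto simp: cross_intersecting_def)
  then obtain j where j: "j \<in> B" "2 \<le> j" "j \<le> k + 1" by auto
  have "2 \<le> card (B \<inter> {1..k+1})"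
  proof (cases "1 \<in> B")
    case True
    thus ?thesis using two[of 1 j] j by auto
  next
    case False
    define B' where "B' = insert 1 (B - {j})"
    have "shift_le B' B"
      unfolding B'_def by (rule shift_le_replace_smaller[OF fin j(1) False]) (use j in simp)
    moreover have "B' \<in> ksubsets n k"
    proof -
      have "card B' = k" using fin j False B1 k by (simp add: B'_def)
      moreover have "B' \<subseteq> {1..n}" using B1 kn by (auto simp: B'_def)
      ultimately show ?thesis by (simp add: ksubsets_iff)
    qed
    ultimately have "B' \<in> G" using initial B by (auto simp: initial_def)
    hence "{2..k+1} \<inter> B' \<noteq> {}" using cross I by (auto simp: cross_intersecting_def)
    then obtain y where y: "y \<in> B'" "2 \<le> y" "y \<le> k + 1" by auto
    hence "y \<in> B" "y \<noteq> j" by (auto simp: B'_def)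
    thus ?thesis using two[of y j] j y by auto
  qed
  thus "B \<in> hits_twice n k (k+1)" using B1 by (simp add: hits_twice_def ksubsets_iff)
qed

theorem theorem1p6:
  fixes n k :: nat and F G :: "nat set set"
  assumes "4 \<le> 2 * k" and "2 * k \<le> n"
    and "F \<subseteq> ksubsets n k" and "G \<subseteq> ksubsets n k"
    and "nontrivial F" and "nontrivial G"
    and "cross_intersecting F G"
    and "initial n k F" and "initial n k G"
  shows "card F + card G \<le> k + 1 + (\<Sum>i\<in>{2..k}. ((k + 1) choose i) * ((n - k - 1) choose (k - i)))"
proof -
  have k: "2 \<le> k" and kn: "k + 1 \<le> n" using assms(1,2) by auto
  have "{2..k+1} \<in> F" "{2..k+1} \<in> G"
    using interval_mem_if_nontrivial assms(5,6,8,9) kn by blast+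
  hence "F \<subseteq> hits_twice n k (k+1)" "G \<subseteq> hits_twice n k (k+1)"
    using subset_hits_twice_if_cross_intersecting_interval assms(7-9) k kn
      cross_intersecting_commute by blast+
  hence "card F + card G \<le> card (hits_twice n k (k+1)) + (k + 1)"
    using card_cross_intersecting_hits_twice[OF assms(2) order.refl assms(8,9,7)] by simp
  thus ?thesis using card_hits_twice[OF kn] by (simp add: diff_diff_left)
qed

end
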